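(* Let $1\le k\le N/2$ and $v\in E_k$. If $k=1$ and $\alpha\ge(N-1)/(N-2)$, then $t(v)<1$ and $v$ is linearly unstable. If $\alpha<(N-1)/(N-2)$, then $v$ is linearly unstable.
   Context: Let $N\ge3$, $\alpha>1$, and $A_{i,j}=1-\delta_{i,j}$ for $i,j\le N$. Let $\Delta=\{v\in\mathbb R_+^N:\sum_iv_i=1,\ v_i\le3/4\ \forall i\}$. For $v$ with nonnegative coordinates let $v^\alpha=(v_i^\alpha)_i$, $H(v)=\sum_{i\neq j}v_i^\alpha v_j^\alpha$, $\pi_i(v)=v_i^\alpha(Av^\alpha)_i/H(v)$, and on $\Delta$ let $F(v)=-v+\pi(v)$. An equilibrium is $v\in\Delta$ with $F(v)=0$. For $1\le k\le N/2$, $E_k$ denotes the set of equilibria $v$ with all coordinates positive, different from the center $(1/N,\dots,1/N)$, and such that $v_1=\dots=v_k$ and $v_{k+1}=\dots=v_N$. For $v\in E_k$, $t(v)=v_N/v_1$. With $DF(v)$ the differential at $v$ of $v\mapsto-v+\pi(v)$ acting on $\{x:\sum_ix_i=0\}$, an equilibrium is linearly unstable if some eigenvalue of $DF(v)$ has positive real part. *)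

theory Defs
  imports "HOL-Analysis.Analysis"
begin

(* Vectors of R^N are represented as functions nat => real; coordinate i (1-based in
   the paper) is stored at index i-1, indices 0..N-1. Coordinates >= N are required
   to be 0 where membership in Delta is concerned. *)

definition Hfun :: "nat \<Rightarrow> real \<Rightarrow> (nat \<Rightarrow> real) \<Rightarrow> real" where
  "Hfun N \<alpha> v = (\<Sum>i<N. \<Sum>j<N. if i \<noteq> j then v i powr \<alpha> * v j powr \<alpha> else 0)"

(* (A v^alpha)_i with A_{ij} = 1 - delta_{ij} *)
definition Avpow :: "nat \<Rightarrow> real \<Rightarrow> (nat \<Rightarrow> real) \<Rightarrow> nat \<Rightarrow> real" where
  "Avpow N \<alpha> v i = (\<Sum>j<N. if j \<noteq> i then v j powr \<alpha> else 0)"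

definition pifun :: "nat \<Rightarrow> real \<Rightarrow> (nat \<Rightarrow> real) \<Rightarrow> nat \<Rightarrow> real" where
  "pifun N \<alpha> v i = v i powr \<alpha> * Avpow N \<alpha> v i / Hfun N \<alpha> v"

definition Delta :: "nat \<Rightarrow> (nat \<Rightarrow> real) set" where
  "Delta N = {v. (\<forall>i<N. 0 \<le> v i \<and> v i \<le> 3/4) \<and> (\<forall>i\<ge>N. v i = 0) \<and> (\<Sum>i<N. v i) = 1}"

definition Ffun :: "nat \<Rightarrow> real \<Rightarrow> (nat \<Rightarrow> real) \<Rightarrow> nat \<Rightarrow> real" where
  "Ffun N \<alpha> v i = - v i + pifun N \<alpha> v i"

definition equilibrium :: "nat \<Rightarrow> real \<Rightarrow> (nat \<Rightarrow> real) \<Rightarrow> bool" where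
  "equilibrium N \<alpha> v \<longleftrightarrow> v \<in> Delta N \<and> (\<forall>i<N. Ffun N \<alpha> v i = 0)"

definition center :: "nat \<Rightarrow> nat \<Rightarrow> real" where
  "center N = (\<lambda>i. if i < N then 1 / real N else 0)"

(* E_k: v_1 = ... = v_k (indices 0..k-1), v_{k+1} = ... = v_N (indices k..N-1) *)
definition Eset :: "nat \<Rightarrow> real \<Rightarrow> nat \<Rightarrow> (nat \<Rightarrow> real) set" where
  "Eset N \<alpha> k = {v. equilibrium N \<alpha> v \<and> (\<forall>i<N. 0 < v i) \<and> v \<noteq> center N
      \<and> (\<forall>i<k. v i = v 0) \<and> (\<forall>i. k \<le> i \<and> i < N \<longrightarrow> v i = v (N - 1))}"

definition tval :: "nat \<Rightarrow> (nat \<Rightarrow> real) \<Rightarrow> real" where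
  "tval N v = v (N - 1) / v 0"

definition DFmat :: "nat \<Rightarrow> real \<Rightarrow> (nat \<Rightarrow> real) \<Rightarrow> nat \<Rightarrow> nat \<Rightarrow> real" where
  "DFmat N \<alpha> v i j = (if i = j then -1 else 0)
     + deriv (\<lambda>s. pifun N \<alpha> (\<lambda>l. v l + (if l = j then s else 0)) i) 0"

definition linearly_unstable :: "nat \<Rightarrow> real \<Rightarrow> (nat \<Rightarrow> real) \<Rightarrow> bool" where
  "linearly_unstable N \<alpha> v \<longleftrightarrow>
     (\<exists>mu::complex. Re mu > 0 \<and>
        (\<exists>x::nat \<Rightarrow> complex. (\<forall>i\<ge>N. x i = 0) \<and> (\<exists>i<N. x i \<noteq> 0) \<and> (\<Sum>i<N. x i) = 0
           \<and> (\<forall>i<N. (\<Sum>j<N. complex_of_real (DFmat N \<alpha> v i j) * x j) = mu * x i)))"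

end

theory Submission
  imports Defs
begin

text \<open>At an equilibrium with positive coordinates the Jacobian acts on \<open>{x. \<Sum>x = 0}\<close> as
  \<open>x \<mapsto> (\<lambda>_i x_i)_i + \<langle>c, x\<rangle> (v_i^\<alpha>)_i\<close> with \<open>c_i = \<alpha> / (S - v_i^\<alpha>)\<close> and
  \<open>\<lambda>_i = \<alpha> - 1 - c_i v_i^\<alpha>\<close>, \<open>S = \<Sum>\<^sub>l v_l^\<alpha>\<close>. So two equal coordinates give an explicit
  eigenvector, and for \<open>k = 1\<close> so does \<open>(N - 1, -1, \<dots>, -1)\<close>. For \<open>v \<in> E_k\<close> the ratio
  \<open>t = v_N / v_1\<close> solves one scalar equation, and the estimates \<open>1 - 1/x < ln x < x - 1\<close>
  applied to its logarithm show that the relevant eigenvalue is positive: that of a pair in the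
  larger block if \<open>t < 1\<close>, of a pair in the smaller block if \<open>t > 1\<close> and \<open>k \<ge> 2\<close>, and of
  \<open>(N - 1, -1, \<dots>, -1)\<close> if \<open>t > 1\<close> and \<open>k = 1\<close>. Thus every \<open>v \<in> E_k\<close> is unstable, whatever
  \<open>\<alpha> > 1\<close>; the same estimate shows that \<open>t > 1\<close> and \<open>k = 1\<close> force
  \<open>\<alpha> < (N - 1) / (N - 2)\<close>.\<close>

definition pow_sum :: "nat \<Rightarrow> real \<Rightarrow> (nat \<Rightarrow> real) \<Rightarrow> real" where
  "pow_sum N \<alpha> v = (\<Sum>l<N. v l powr \<alpha>)"

definition pow_sq_sum :: "nat \<Rightarrow> real \<Rightarrow> (nat \<Rightarrow> real) \<Rightarrow> real" where
  "pow_sq_sum N \<alpha> v = (\<Sum>l<N. (v l powr \<alpha>)^2)"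

lemma sum_lessThan_except:
  fixes f :: "nat \<Rightarrow> real"
  assumes "i < N"
  shows "(\<Sum>l<N. if l \<noteq> i then f l else 0) = (\<Sum>l<N. f l) - f i"
proof -
  have "(\<Sum>l<N. if l \<noteq> i then f l else 0) = (\<Sum>l<N. f l - (if l = i then f l else 0))"
    by (rule sum.cong) auto
  also have "\<dots> = (\<Sum>l<N. f l) - f i"
    using assms by (simp add: sum_subtractf sum.delta)
  finally show ?thesis .
qed

lemma Avpow_eq: "i < N \<Longrightarrow> Avpow N \<alpha> v i = pow_sum N \<alpha> v - v i powr \<alpha>"
  unfolding Avpow_def pow_sum_def by (subst sum_lessThan_except) (auto simp: eq_commute)

lemma Hfun_eq: "Hfun N \<alpha> v = (pow_sum N \<alpha> v)^2 - pow_sq_sum N \<alpha> v"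
proof -
  have "Hfun N \<alpha> v = (\<Sum>i<N. v i powr \<alpha> * Avpow N \<alpha> v i)"
    unfolding Hfun_def Avpow_def
    by (rule sum.cong) (auto simp: sum_distrib_left intro!: sum.cong)
  also have "\<dots> = (\<Sum>i<N. v i powr \<alpha> * pow_sum N \<alpha> v - (v i powr \<alpha>)^2)"
    by (rule sum.cong) (auto simp: Avpow_eq algebra_simps power2_eq_square)
  also have "\<dots> = (pow_sum N \<alpha> v)^2 - pow_sq_sum N \<alpha> v"
    by (simp add: sum_subtractf pow_sq_sum_def power2_eq_square
        sum_distrib_right[symmetric] pow_sum_def)
  finally show ?thesis .
qed

lemma pifun_eq:
  "i < N \<Longrightarrow> pifun N \<alpha> v i =
     v i powr \<alpha> * (pow_sum N \<alpha> v - v i powr \<alpha>) / ((pow_sum N \<alpha> v)^2 - pow_sq_sum N \<alpha> v)"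
  unfolding pifun_def by (simp add: Avpow_eq Hfun_eq)

lemma sum_add_at:
  fixes f :: "real \<Rightarrow> real" and v :: "nat \<Rightarrow> real"
  assumes "j < N"
  shows "(\<Sum>l<N. f (v l + (if l = j then s else 0))) = (\<Sum>l<N. f (v l)) - f (v j) + f (v j + s)"
proof -
  have "(\<Sum>l<N. f (v l + (if l = j then s else 0))) =
        (\<Sum>l<N. f (v l) + (if l = j then f (v j + s) - f (v j) else 0))"
    by (rule sum.cong) auto
  also have "\<dots> = (\<Sum>l<N. f (v l)) - f (v j) + f (v j + s)"
    using assms by (simp add: sum.distrib)
  finally show ?thesis .
qed

lemma pifun_add_at:
  fixes v :: "nat \<Rightarrow> real" and s \<alpha> :: real
  assumes i: "i < N" and j: "j < N"
  defines "g \<equiv> (v j + s) powr \<alpha>"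
  defines "R \<equiv> (if i = j then g else v i powr \<alpha>)"
  shows "pifun N \<alpha> (\<lambda>l. v l + (if l = j then s else 0)) i =
    R * (pow_sum N \<alpha> v - v j powr \<alpha> + g - R) /
      ((pow_sum N \<alpha> v - v j powr \<alpha> + g)^2 - (pow_sq_sum N \<alpha> v - (v j powr \<alpha>)^2 + g^2))"
  using i j sum_add_at[OF j, of "\<lambda>x. x powr \<alpha>" v s] sum_add_at[OF j, of "\<lambda>x. (x powr \<alpha>)^2" v s]
  by (simp add: pifun_eq pow_sum_def pow_sq_sum_def R_def g_def)

lemma deriv_pifun:
  assumes i: "i < N" and j: "j < N" and vj: "0 < v j" and H: "Hfun N \<alpha> v \<noteq> 0"
  shows "deriv (\<lambda>s. pifun N \<alpha> (\<lambda>l. v l + (if l = j then s else 0)) i) 0 =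
    \<alpha> * v j powr (\<alpha> - 1) / Hfun N \<alpha> v *
    ((if i = j then pow_sum N \<alpha> v - 2 * v i powr \<alpha> else 0) + v i powr \<alpha>
      - 2 * pifun N \<alpha> v i * (pow_sum N \<alpha> v - v j powr \<alpha>))"
proof -
  define S Q P where "S = pow_sum N \<alpha> v" and "Q = pow_sq_sum N \<alpha> v" and "P = v j powr \<alpha>"
  define g where "g = (\<lambda>s. (v j + s) powr \<alpha>)"
  have g: "(g has_real_derivative \<alpha> * v j powr (\<alpha> - 1)) (at 0)"
    unfolding g_def using vj by (auto intro!: derivative_eq_intros)
  have g0: "g 0 = P" by (simp add: g_def P_def)
  have Hn: "S^2 - Q \<noteq> 0" and HSQ: "Hfun N \<alpha> v = S^2 - Q"
    using H by (simp_all add: S_def Q_def Hfun_eq)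
  have pv: "pifun N \<alpha> v i = v i powr \<alpha> * (S - v i powr \<alpha>) / (S^2 - Q)"
    using pifun_eq[OF i] by (simp add: S_def Q_def)
  show ?thesis
  proof (cases "i = j")
    case True
    have "((\<lambda>s. g s * (S - P + g s - g s) / ((S - P + g s)^2 - (Q - P^2 + (g s)^2)))
        has_real_derivative \<alpha> * v j powr (\<alpha> - 1) / (S^2 - Q) *
          ((S - 2 * P) + P - 2 * (P * (S - P) / (S^2 - Q)) * (S - P))) (at 0)"
      using Hn g0 by (auto intro!: derivative_eq_intros g simp: field_simps power2_eq_square)
    then show ?thesis
      using True i j pv unfolding pifun_add_at[OF i j] HSQ
      by (intro DERIV_imp_deriv) (simp add: S_def Q_def P_def g_def)
  next
    case False
    define R where "R = v i powr \<alpha>"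
    have "((\<lambda>s. R * (S - P + g s - R) / ((S - P + g s)^2 - (Q - P^2 + (g s)^2)))
        has_real_derivative \<alpha> * v j powr (\<alpha> - 1) / (S^2 - Q) *
          (R - 2 * (R * (S - R) / (S^2 - Q)) * (S - P))) (at 0)"
      using Hn g0 by (auto intro!: derivative_eq_intros g simp: field_simps power2_eq_square)
    then show ?thesis
      using False i j pv unfolding pifun_add_at[OF i j] HSQ
      by (intro DERIV_imp_deriv) (simp add: S_def Q_def P_def R_def g_def)
  qed
qed

lemma Hfun_fixed_point:
  assumes fixed: "\<forall>i<N. pifun N \<alpha> v i = v i" and pos: "\<forall>i<N. 0 < v i" and l: "l < N"
  shows "Hfun N \<alpha> v = v l powr (\<alpha> - 1) * (pow_sum N \<alpha> v - v l powr \<alpha>)"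
    and "Hfun N \<alpha> v \<noteq> 0"
proof -
  have vl: "0 < v l" using pos l by blast
  have e: "v l powr \<alpha> * (pow_sum N \<alpha> v - v l powr \<alpha>) / Hfun N \<alpha> v = v l"
    using fixed l by (simp add: pifun_def Avpow_eq)
  then show H: "Hfun N \<alpha> v \<noteq> 0" using vl by auto
  have "v l powr \<alpha> = v l * v l powr (\<alpha> - 1)"
    using vl by (simp add: powr_mult_base)
  then have "v l * (v l powr (\<alpha> - 1) * (pow_sum N \<alpha> v - v l powr \<alpha>)) = v l * Hfun N \<alpha> v"
    using e H by (simp add: field_simps)
  then show "Hfun N \<alpha> v = v l powr (\<alpha> - 1) * (pow_sum N \<alpha> v - v l powr \<alpha>)"
    using vl by simp
qed

lemma DFmat_fixed_point:
  assumes fixed: "\<forall>i<N. pifun N \<alpha> v i = v i" and pos: "\<forall>i<N. 0 < v i"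
    and i: "i < N" and j: "j < N"
  shows "DFmat N \<alpha> v i j =
    (if i = j then \<alpha> - 1 - \<alpha> * v i powr \<alpha> / (pow_sum N \<alpha> v - v i powr \<alpha>) else 0)
    + \<alpha> * v i powr \<alpha> / (pow_sum N \<alpha> v - v j powr \<alpha>) - 2 * \<alpha> * v i"
proof -
  define S where "S = pow_sum N \<alpha> v"
  have Hj: "Hfun N \<alpha> v = v j powr (\<alpha> - 1) * (S - v j powr \<alpha>)" and Hn: "Hfun N \<alpha> v \<noteq> 0"
    using Hfun_fixed_point[OF fixed pos j] by (simp_all add: S_def)
  have Si: "S - v i powr \<alpha> \<noteq> 0"
    using Hfun_fixed_point[OF fixed pos i] by (simp add: S_def)
  have vj: "0 < v j" using pos j by blast
  have c: "\<alpha> * v j powr (\<alpha> - 1) / Hfun N \<alpha> v = \<alpha> / (S - v j powr \<alpha>)"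
    using Hj vj by simp
  have Sj: "S - v j powr \<alpha> \<noteq> 0" using Hj Hn by auto
  show ?thesis
    unfolding DFmat_def deriv_pifun[OF i j vj Hn] c
    using fixed i Si Sj by (auto simp: S_def[symmetric] field_simps)
qed

lemma DFmat_mult_fixed_point:
  assumes fixed: "\<forall>i<N. pifun N \<alpha> v i = v i" and pos: "\<forall>i<N. 0 < v i"
    and i: "i < N" and x: "(\<Sum>j<N. x j) = 0"
  shows "(\<Sum>j<N. DFmat N \<alpha> v i j * x j) =
    (\<alpha> - 1 - \<alpha> * v i powr \<alpha> / (pow_sum N \<alpha> v - v i powr \<alpha>)) * x i
    + v i powr \<alpha> * (\<Sum>j<N. \<alpha> / (pow_sum N \<alpha> v - v j powr \<alpha>) * x j)"
proof -
  have "(\<Sum>j<N. DFmat N \<alpha> v i j * x j) = (\<Sum>j<N.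
      (if j = i then (\<alpha> - 1 - \<alpha> * v i powr \<alpha> / (pow_sum N \<alpha> v - v i powr \<alpha>)) * x j else 0)
      + v i powr \<alpha> * (\<alpha> / (pow_sum N \<alpha> v - v j powr \<alpha>) * x j) - 2 * \<alpha> * v i * x j)"
    by (rule sum.cong) (auto simp: DFmat_fixed_point[OF fixed pos i] algebra_simps)
  also have "\<dots> = (\<alpha> - 1 - \<alpha> * v i powr \<alpha> / (pow_sum N \<alpha> v - v i powr \<alpha>)) * x i
      + v i powr \<alpha> * (\<Sum>j<N. \<alpha> / (pow_sum N \<alpha> v - v j powr \<alpha>) * x j)"
    using i x by (simp add: sum.distrib sum_subtractf sum_distrib_left flip: sum_distrib_left[of "2 * \<alpha> * v i"])
  finally show ?thesis .
qed

lemma linearly_unstableI: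
  assumes "\<forall>i\<ge>N. x i = 0" "r < N" "x r \<noteq> 0" "(\<Sum>i<N. x i) = 0"
    and "\<forall>i<N. (\<Sum>j<N. DFmat N \<alpha> v i j * x j) = \<mu> * x i" "0 < \<mu>"
  shows "linearly_unstable N \<alpha> v"
proof -
  define z where "z = (\<lambda>i. complex_of_real (x i))"
  have "(\<Sum>i<N. z i) = 0"
    using assms(4) by (simp add: z_def flip: of_real_sum)
  moreover have "\<forall>i<N. (\<Sum>j<N. complex_of_real (DFmat N \<alpha> v i j) * z j) = complex_of_real \<mu> * z i"
    using assms(5) by (simp add: z_def flip: of_real_sum of_real_mult)
  moreover have "\<forall>i\<ge>N. z i = 0" and "\<exists>i<N. z i \<noteq> 0"
    using assms(1-3) by (auto simp: z_def)
  ultimately show ?thesis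
    unfolding linearly_unstable_def using \<open>0 < \<mu>\<close>
    by (intro exI[of _ "complex_of_real \<mu>"]) auto
qed

text \<open>If \<open>v_p = v_q\<close>, then \<open>e_p - e_q\<close> is an eigenvector of \<open>DF(v)\<close> with eigenvalue
  \<open>\<alpha> - 1 - \<alpha> v_p^\<alpha> / (S - v_p^\<alpha>)\<close>, where \<open>S = \<Sum>\<^sub>l v_l^\<alpha>\<close>.\<close>

lemma unstable_if_equal_coordinates:
  assumes fixed: "\<forall>i<N. pifun N \<alpha> v i = v i" and pos: "\<forall>i<N. 0 < v i" and \<alpha>: "1 < \<alpha>"
    and p: "p < N" and q: "q < N" and pq: "p \<noteq> q" and vpq: "v p = v q"
    and ineq: "\<alpha> * v p powr \<alpha> < (\<alpha> - 1) * (pow_sum N \<alpha> v - v p powr \<alpha>)"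
  shows "linearly_unstable N \<alpha> v"
proof -
  define x where "x = (\<lambda>l. (if l = p then 1 else 0) - (if l = q then 1 else (0::real)))"
  define \<mu> where "\<mu> = \<alpha> - 1 - \<alpha> * v p powr \<alpha> / (pow_sum N \<alpha> v - v p powr \<alpha>)"
  have sx: "(\<Sum>l<N. f l * x l) = f p - f q" for f
  proof -
    have "(\<Sum>l<N. f l * x l) = (\<Sum>l<N. (if l = p then f l else 0) - (if l = q then f l else 0))"
      by (rule sum.cong) (auto simp: x_def)
    then show ?thesis using p q by (simp add: sum_subtractf)
  qed
  have s0: "(\<Sum>l<N. x l) = 0" using sx[of "\<lambda>_. 1"] by simp
  have "0 < v p" using pos p by blast
  then have "0 < \<alpha> * v p powr \<alpha>" using \<alpha> by simp
  then have "0 < pow_sum N \<alpha> v - v p powr \<alpha>"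
    using ineq \<alpha> by (smt (verit) mult_le_0_iff)
  then have "0 < \<mu>" using ineq by (simp add: \<mu>_def field_simps)
  moreover have "\<forall>i<N. (\<Sum>j<N. DFmat N \<alpha> v i j * x j) = \<mu> * x i"
    using sx[of "\<lambda>j. \<alpha> / (pow_sum N \<alpha> v - v j powr \<alpha>)"] s0 vpq pq
    by (auto simp: DFmat_mult_fixed_point[OF fixed pos] \<mu>_def x_def)
  ultimately show ?thesis
    using p q pq s0 by (intro linearly_unstableI[where x = x and r = p]) (auto simp: x_def)
qed

lemma sum_first_and_rest:
  fixes f :: "nat \<Rightarrow> real"
  assumes rest: "\<And>l. 1 \<le> l \<Longrightarrow> l < Suc n \<Longrightarrow> f l = f 1"
  shows "(\<Sum>l<Suc n. f l) = f 0 + n * f 1"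
    and "(\<Sum>l<Suc n. f l * (if l = 0 then real n else if l < Suc n then -1 else 0)) = n * (f 0 - f 1)"
proof -
  have "(\<Sum>l<n. f (Suc l)) = (\<Sum>l<n. f 1)"
    by (intro sum.cong refl rest) auto
  then show "(\<Sum>l<Suc n. f l) = f 0 + n * f 1"
    and "(\<Sum>l<Suc n. f l * (if l = 0 then real n else if l < Suc n then -1 else 0)) = n * (f 0 - f 1)"
    unfolding sum.lessThan_Suc_shift by (simp_all add: sum_negf right_diff_distrib)
qed

text \<open>If all coordinates but the first coincide, \<open>(N - 1, -1, \<dots>, -1)\<close> is an eigenvector
  of \<open>DF(v)\<close> with eigenvalue \<open>\<alpha> - 1 - \<alpha> v_0^\<alpha> / (S - v_1^\<alpha>)\<close>.\<close>

lemma unstable_if_one_against_rest: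
  assumes fixed: "\<forall>i<N. pifun N \<alpha> v i = v i" and pos: "\<forall>i<N. 0 < v i" and \<alpha>: "1 < \<alpha>"
    and N: "2 \<le> N" and rest: "\<And>i. 1 \<le> i \<Longrightarrow> i < N \<Longrightarrow> v i = v 1"
    and ineq: "\<alpha> * v 0 powr \<alpha> < (\<alpha> - 1) * (pow_sum N \<alpha> v - v 1 powr \<alpha>)"
  shows "linearly_unstable N \<alpha> v"
proof -
  obtain n where Nn: "N = Suc n" and n: "1 \<le> n" using N by (cases N) auto
  define m where "m = real n"
  define S PA PB where "S = pow_sum N \<alpha> v" and "PA = v 0 powr \<alpha>" and "PB = v 1 powr \<alpha>"
  define cA cB where "cA = \<alpha> / (S - PA)" and "cB = \<alpha> / (S - PB)"
  define z where "z = (\<lambda>l. if l = 0 then real n else if l < Suc n then -1 else (0::real))"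
  define \<mu> where "\<mu> = \<alpha> - 1 - PA * cB"
  have rest': "\<And>l. 1 \<le> l \<Longrightarrow> l < Suc n \<Longrightarrow> v l = v 1" using rest Nn by blast
  have sz: "(\<Sum>l<N. f l * z l) = m * (f 0 - f 1)" if "\<And>l. 1 \<le> l \<Longrightarrow> l < Suc n \<Longrightarrow> f l = f 1"
    for f :: "nat \<Rightarrow> real"
    unfolding Nn z_def m_def using that by (rule sum_first_and_rest(2))
  have "(\<Sum>l<Suc n. v l powr \<alpha>) = PA + m * PB"
    unfolding PA_def PB_def m_def by (rule sum_first_and_rest(1)) (metis rest')
  then have S: "S = PA + m * PB" by (simp only: S_def pow_sum_def Nn)
  have "0 < v 0" "0 < v 1" using pos N by auto
  then have PA0: "0 < PA" and PB0: "0 < PB" by (simp_all add: PA_def PB_def)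
  have m: "1 \<le> m" using n by (simp add: m_def)
  have cA: "m * PB * cA = \<alpha>" using S m PB0 by (simp add: cA_def)
  have SB: "S - PB = PA + (m - 1) * PB" using S by (simp add: algebra_simps)
  have SB0: "0 < S - PB" unfolding SB using PA0 PB0 m by (simp add: add_pos_nonneg)
  have cB: "(PA + (m - 1) * PB) * cB = \<alpha>" using SB SB0 by (simp add: cB_def)
  have "PA * cB < \<alpha> - 1"
    using ineq SB0 by (simp add: cB_def S_def PA_def PB_def pos_divide_less_eq mult.commute)
  then have "0 < \<mu>" by (simp add: \<mu>_def)
  moreover have "(\<Sum>l<N. z l) = 0" using sz[of "\<lambda>_. 1"] by simp
  moreover have "(\<Sum>j<N. DFmat N \<alpha> v i j * z j) = \<mu> * z i" if i: "i < N" for i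
  proof -
    have "(\<Sum>j<N. \<alpha> / (S - v j powr \<alpha>) * z j) = m * (cA - cB)"
      unfolding cA_def cB_def PA_def PB_def by (rule sz) (metis rest')
    then have DF: "(\<Sum>j<N. DFmat N \<alpha> v i j * z j) =
        (\<alpha> - 1 - v i powr \<alpha> * (\<alpha> / (S - v i powr \<alpha>))) * z i + v i powr \<alpha> * (m * (cA - cB))"
      using DFmat_mult_fixed_point[OF fixed pos i, of z] sz[of "\<lambda>_. 1"] by (simp add: S_def)
    show ?thesis
    proof (cases "i = 0")
      case True
      then show ?thesis unfolding DF
        by (simp add: z_def m_def \<mu>_def cA_def[symmetric] PA_def[symmetric] algebra_simps)
    next
      case False
      then have "v i powr \<alpha> = PB" using rest[OF _ i] by (simp add: PB_def)
      moreover have "\<alpha> * PB / (S - PB) = PB * cB" by (simp add: cB_def)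
      ultimately show ?thesis unfolding DF using False i Nn cA cB
        by (simp add: z_def \<mu>_def cB_def[symmetric] PB_def[symmetric] algebra_simps)
    qed
  qed
  ultimately show ?thesis
    using Nn n by (intro linearly_unstableI[where x = z and r = 0]) (auto simp: z_def)
qed

text \<open>For \<open>v \<in> E_k\<close> and \<open>m = N - k\<close>, the fixed-point equations at the coordinates \<open>0\<close> and
  \<open>N - 1\<close> give \<open>v_0^(\<alpha>-1) (S - v_0^\<alpha>) = H(v) = v_(N-1)^(\<alpha>-1) (S - v_(N-1)^\<alpha>)\<close>; dividing
  by \<open>v_0^(2\<alpha>-1)\<close> yields the following equation for \<open>t = tval N v\<close>.\<close>

definition level_equation :: "real \<Rightarrow> real \<Rightarrow> real \<Rightarrow> real \<Rightarrow> bool" where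
  "level_equation \<alpha> k m t \<longleftrightarrow>
     k - 1 + m * t powr \<alpha> = t powr (\<alpha> - 1) * (k + (m - 1) * t powr \<alpha>)"

lemma ln_gt_1_minus_inverse: "0 < x \<Longrightarrow> x \<noteq> 1 \<Longrightarrow> 1 - 1 / x < ln x" for x :: real
  using ln_diff_less[of 1 x] by (simp add: ln_div field_simps)

lemma ln_ge_1_minus_inverse: "0 < x \<Longrightarrow> 1 - 1 / x \<le> ln x" for x :: real
  using ln_gt_1_minus_inverse[of x] by (cases "x = 1") auto

lemma ln_lt_minus_one: "0 < x \<Longrightarrow> x \<noteq> 1 \<Longrightarrow> ln x < x - 1" for x :: real
  using ln_diff_less[of x 1] by simp

lemma level_equation_lt_1:
  fixes \<alpha> k m t :: real
  assumes eq: "level_equation \<alpha> k m t" and t: "0 < t" "t < 1"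
    and \<alpha>: "1 < \<alpha>" and k: "1 \<le> k" and m: "1 \<le> m"
  shows "\<alpha> * t powr \<alpha> < (\<alpha> - 1) * (k + (m - 1) * t powr \<alpha>)"
proof -
  define x y where "x = t powr \<alpha>" and "y = t powr (\<alpha> - 1)"
  have x: "0 < x" "x < 1" using t \<alpha> powr_less_mono2[of \<alpha> t 1] by (auto simp: x_def)
  have y: "0 < y" using t by (simp add: y_def)
  have D: "0 < k + (m - 1) * x" using k m x by (smt (verit) mult_nonneg_nonneg)
  have "(y - 1) * (k + (m - 1) * x) = x - 1"
    using eq by (simp add: level_equation_def x_def y_def algebra_simps)
  then have "ln y * (k + (m - 1) * x) \<le> x - 1"
    using ln_le_minus_one[OF y] D by (metis mult_right_mono less_imp_le)
  moreover have "x - 1 < x * ln x"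
    using ln_gt_1_minus_inverse[of x] x by (simp add: field_simps)
  ultimately have "((\<alpha> - 1) * (k + (m - 1) * x)) * ln t < (\<alpha> * x) * ln t"
    using t by (simp add: x_def y_def ln_powr algebra_simps)
  then show ?thesis using t by (simp add: x_def mult_less_cancel_right)
qed

lemma level_equation_gt_1:
  fixes \<alpha> k m t :: real
  assumes eq: "level_equation \<alpha> k m t" and t: "1 < t"
    and \<alpha>: "1 < \<alpha>" and k: "1 \<le> k" and m: "1 \<le> m"
  shows "\<alpha> < (\<alpha> - 1) * (k - 1 + m * t powr \<alpha>)"
proof -
  define x y where "x = t powr \<alpha>" and "y = t powr (\<alpha> - 1)"
  have x: "1 < x" using t \<alpha> powr_less_mono2[of \<alpha> 1 t] by (auto simp: x_def)
  have y: "0 < y" using t by (simp add: y_def)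
  have D: "0 < k - 1 + m * x" using k m x by (smt (verit) mult_less_cancel_left1)
  have "(1 - 1 / y) * (k - 1 + m * x) = x - 1"
    using eq y by (simp add: level_equation_def x_def y_def field_simps)
  then have "x - 1 \<le> ln y * (k - 1 + m * x)"
    using ln_ge_1_minus_inverse[OF y] D by (metis mult_right_mono less_imp_le)
  moreover have "ln x < x - 1" using ln_lt_minus_one[of x] x by simp
  ultimately have "\<alpha> * ln t < ((\<alpha> - 1) * (k - 1 + m * x)) * ln t"
    using t by (simp add: x_def y_def ln_powr algebra_simps)
  then show ?thesis using t by (simp add: x_def mult_less_cancel_right)
qed

lemma level_equation_gt_1_single:
  fixes \<alpha> m t :: real
  assumes eq: "level_equation \<alpha> 1 m t" and t: "1 < t" and \<alpha>: "1 < \<alpha>" and m: "2 \<le> m"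
  shows "\<alpha> < (\<alpha> - 1) * (1 + (m - 1) * t powr \<alpha>)"
proof -
  define x y where "x = t powr \<alpha>" and "y = t powr (\<alpha> - 1)"
  have x: "1 < x" using t \<alpha> powr_less_mono2[of \<alpha> 1 t] by (auto simp: x_def)
  have y: "0 < y" using t by (simp add: y_def)
  have xy: "x = t * y" using t by (simp add: x_def y_def powr_diff)
  have "y * (m * t) = y * (1 + (m - 1) * x)"
    using eq xy by (simp add: level_equation_def x_def[symmetric] y_def[symmetric] algebra_simps)
  then have mt: "m * t = 1 + (m - 1) * x" using y by simp
  have iy: "1 - 1 / y = (x - 1) / (m * x)"
  proof -
    have "1 / y = m * t / (m * x)" using y t m by (simp add: xy)
    also have "\<dots> = (1 + (m - 1) * x) / (m * x)" by (simp only: mt)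
    finally show ?thesis using x m by (simp add: field_simps)
  qed
  have "(1 - 1 / y) * ((m - 1) * x) \<le> ln y * ((m - 1) * x)"
    using x m by (intro mult_right_mono ln_ge_1_minus_inverse y) simp
  then have "(m - 1) * (x - 1) / m \<le> ln y * ((m - 1) * x)"
    using x m by (simp add: iy mult.commute)
  moreover have "ln t < (m - 1) * (x - 1) / m"
  proof -
    have "t - 1 = (m - 1) * (x - 1) / m" using mt m by (simp add: field_simps)
    then show ?thesis using ln_lt_minus_one[of t] t by simp
  qed
  ultimately have "1 * ln t < ((\<alpha> - 1) * (m - 1) * x) * ln t"
    using t by (simp add: y_def ln_powr algebra_simps)
  then have "1 < (\<alpha> - 1) * (m - 1) * x" using t by (simp add: mult_less_cancel_right)
  then show ?thesis by (simp add: x_def algebra_simps)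
qed

lemma level_equation_gt_1_single_alpha_bound:
  fixes \<alpha> m t :: real
  assumes eq: "level_equation \<alpha> 1 m t" and t: "1 < t" and \<alpha>: "1 < \<alpha>" and m: "2 \<le> m"
  shows "\<alpha> < m / (m - 1)"
proof (rule ccontr)
  assume "\<not> \<alpha> < m / (m - 1)"
  then have a1: "1 / (m - 1) \<le> \<alpha> - 1" using m by (simp add: field_simps)
  define x y where "x = t powr \<alpha>" and "y = t powr (\<alpha> - 1)"
  have y: "0 < y" using t by (simp add: y_def)
  have xy: "x = t * y" using t by (simp add: x_def y_def powr_diff)
  have "y * (m * t) = y * (1 + (m - 1) * x)"
    using eq xy by (simp add: level_equation_def x_def[symmetric] y_def[symmetric] algebra_simps)
  then have mt: "m * t = 1 + (m - 1) * x" using y by simp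
  have "(t - 1) / t < ln t"
    using ln_gt_1_minus_inverse[of t] t by (simp add: diff_divide_distrib)
  then have "(\<alpha> - 1) * ((t - 1) / t) < ln y"
    using t \<alpha> by (simp add: y_def ln_powr del: times_divide_eq_right)
  then have "1 + (\<alpha> - 1) * ((t - 1) / t) < y"
    using ln_le_minus_one[OF y] by simp
  then have "t + (\<alpha> - 1) * (t - 1) < x"
    using mult_strict_left_mono[of _ y t] t xy by (simp add: field_simps)
  moreover have "(t - 1) / (m - 1) \<le> (\<alpha> - 1) * (t - 1)"
    using mult_right_mono[OF a1, of "t - 1"] t by simp
  ultimately have "t + (t - 1) / (m - 1) < x" by simp
  then have "(m - 1) * t + (t - 1) < (m - 1) * x"
    using m by (simp add: field_simps)
  then show False using mt by (simp add: algebra_simps)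
qed

locale Ek_equilibrium =
  fixes N k :: nat and \<alpha> :: real and v :: "nat \<Rightarrow> real"
  assumes N_ge_3: "3 \<le> N" and alpha_gt_1: "1 < \<alpha>"
    and k_ge_1: "1 \<le> k" and k_le_half: "2 * k \<le> N"
    and v_in_Eset: "v \<in> Eset N \<alpha> k"
begin

lemma equilibrium: "equilibrium N \<alpha> v" and positive: "\<forall>i<N. 0 < v i"
  and not_center: "v \<noteq> center N"
  using v_in_Eset unfolding Eset_def by blast+

lemma fixed_point: "\<forall>i<N. pifun N \<alpha> v i = v i"
  using equilibrium by (simp add: equilibrium_def Ffun_def)

lemma first_block: "i < k \<Longrightarrow> v i = v 0"
  using v_in_Eset unfolding Eset_def by blast

lemma last_block: "k \<le> i \<Longrightarrow> i < N \<Longrightarrow> v i = v (N - 1)"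
  using v_in_Eset unfolding Eset_def by blast

lemma v0_pos: "0 < v 0" and vlast_pos: "0 < v (N - 1)"
  using positive N_ge_3 by auto

lemma tval_pos: "0 < tval N v"
  using v0_pos vlast_pos by (simp add: tval_def)

lemma tval_ne_1: "tval N v \<noteq> 1"
proof
  assume "tval N v = 1"
  then have same: "v i = v 0" if "i < N" for i
    using first_block[of i] last_block[of i] v0_pos that by (cases "i < k") (auto simp: tval_def)
  have "(\<Sum>i<N. v i) = (\<Sum>i<N. v 0)" by (intro sum.cong refl same) simp
  moreover have "(\<Sum>i<N. v i) = 1" and zero: "\<forall>i\<ge>N. v i = 0"
    using equilibrium by (auto simp: equilibrium_def Delta_def)
  ultimately have "v 0 = 1 / N" using N_ge_3 by (simp add: field_simps)
  then have "v = center N"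
    unfolding fun_eq_iff center_def using same zero by (metis (full_types) not_le)
  with not_center show False by contradiction
qed

lemma powr_last: "v (N - 1) powr \<alpha> = v 0 powr \<alpha> * tval N v powr \<alpha>"
  using v0_pos vlast_pos by (simp add: tval_def powr_divide)

lemma N_minus_k_ge_2: "2 \<le> N - k"
  using N_ge_3 k_ge_1 k_le_half by linarith

lemma pow_sum_Eset: "pow_sum N \<alpha> v = v 0 powr \<alpha> * (k + real (N - k) * tval N v powr \<alpha>)"
proof -
  have "pow_sum N \<alpha> v = (\<Sum>l\<in>{0..<k}. v l powr \<alpha>) + (\<Sum>l\<in>{k..<N}. v l powr \<alpha>)"
    unfolding pow_sum_def lessThan_atLeast0 using k_le_half
    by (simp add: sum.atLeastLessThan_concat)
  also have "(\<Sum>l\<in>{0..<k}. v l powr \<alpha>) = (\<Sum>l\<in>{0..<k}. v 0 powr \<alpha>)"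
    by (intro sum.cong refl arg_cong[where f = "\<lambda>x. x powr \<alpha>"] first_block) auto
  also have "(\<Sum>l\<in>{k..<N}. v l powr \<alpha>) = (\<Sum>l\<in>{k..<N}. v (N - 1) powr \<alpha>)"
    by (intro sum.cong refl arg_cong[where f = "\<lambda>x. x powr \<alpha>"] last_block) auto
  finally show ?thesis using powr_last by (simp add: algebra_simps)
qed

lemma level_equation_tval: "level_equation \<alpha> k (N - k) (tval N v)"
proof -
  define t S P0 where "t = tval N v" and "S = pow_sum N \<alpha> v" and "P0 = v 0 powr \<alpha>"
  have "0 < N" "N - 1 < N" using N_ge_3 by auto
  then have "v 0 powr (\<alpha> - 1) * (S - P0) = v (N - 1) powr (\<alpha> - 1) * (S - v (N - 1) powr \<alpha>)"
    using Hfun_fixed_point(1)[OF fixed_point positive] unfolding S_def P0_def by metis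
  also have "v (N - 1) powr (\<alpha> - 1) = v 0 powr (\<alpha> - 1) * t powr (\<alpha> - 1)"
    using v0_pos vlast_pos by (simp add: t_def tval_def powr_divide)
  also have "v (N - 1) powr \<alpha> = P0 * t powr \<alpha>"
    unfolding powr_last P0_def t_def ..
  finally have "S - P0 = t powr (\<alpha> - 1) * (S - P0 * t powr \<alpha>)"
    using v0_pos by simp
  then have "P0 * (real k - 1 + (N - k) * t powr \<alpha>) =
             P0 * (t powr (\<alpha> - 1) * (k + (real (N - k) - 1) * t powr \<alpha>))"
    unfolding S_def pow_sum_Eset P0_def[symmetric] t_def[symmetric] by (simp add: algebra_simps)
  then show ?thesis
    using v0_pos by (simp add: level_equation_def P0_def t_def)
qed

lemma unstable_if_tval_lt_1:
  assumes t: "tval N v < 1"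
  shows "linearly_unstable N \<alpha> v"
proof (rule unstable_if_equal_coordinates[OF fixed_point positive alpha_gt_1])
  show "N - 2 < N" "N - 1 < N" "N - 2 \<noteq> N - 1" using N_ge_3 by auto
  show same: "v (N - 2) = v (N - 1)"
    using last_block[of "N - 2"] N_minus_k_ge_2 N_ge_3 by simp
  have "\<alpha> * tval N v powr \<alpha> < (\<alpha> - 1) * (k + (real (N - k) - 1) * tval N v powr \<alpha>)"
    using level_equation_lt_1[OF level_equation_tval tval_pos t alpha_gt_1] k_ge_1 N_minus_k_ge_2
    by simp
  then have "v 0 powr \<alpha> * (\<alpha> * tval N v powr \<alpha>) <
      v 0 powr \<alpha> * ((\<alpha> - 1) * (k + (real (N - k) - 1) * tval N v powr \<alpha>))"
    using v0_pos by simp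
  then show "\<alpha> * v (N - 2) powr \<alpha> < (\<alpha> - 1) * (pow_sum N \<alpha> v - v (N - 2) powr \<alpha>)"
    unfolding same powr_last pow_sum_Eset by (simp add: algebra_simps)
qed

lemma unstable_if_tval_gt_1:
  assumes t: "1 < tval N v"
  shows "linearly_unstable N \<alpha> v"
proof (cases "2 \<le> k")
  case True
  show ?thesis
  proof (rule unstable_if_equal_coordinates[OF fixed_point positive alpha_gt_1])
    show "0 < N" "1 < N" "0 \<noteq> (1::nat)" using N_ge_3 by auto
    show same: "v 0 = v 1" using first_block[of 1] True by simp
    have "\<alpha> < (\<alpha> - 1) * (real k - 1 + real (N - k) * tval N v powr \<alpha>)"
      using level_equation_gt_1[OF level_equation_tval t alpha_gt_1] k_ge_1 N_minus_k_ge_2 by simp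
    then have "v 0 powr \<alpha> * \<alpha> < v 0 powr \<alpha> * ((\<alpha> - 1) * (real k - 1 + real (N - k) * tval N v powr \<alpha>))"
      using v0_pos by simp
    then show "\<alpha> * v 0 powr \<alpha> < (\<alpha> - 1) * (pow_sum N \<alpha> v - v 0 powr \<alpha>)"
      unfolding pow_sum_Eset by (simp add: algebra_simps)
  qed
next
  case False
  then have k: "k = 1" using k_ge_1 by simp
  show ?thesis
  proof (rule unstable_if_one_against_rest[OF fixed_point positive alpha_gt_1])
    show "2 \<le> N" using N_ge_3 by simp
    show rest: "v i = v 1" if "1 \<le> i" "i < N" for i
      using last_block[of i] last_block[of 1] that k N_ge_3 by simp
    have "\<alpha> < (\<alpha> - 1) * (1 + (real (N - 1) - 1) * tval N v powr \<alpha>)"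
      using level_equation_gt_1_single[of \<alpha> "N - 1", OF _ t alpha_gt_1] level_equation_tval
        k N_minus_k_ge_2 by simp
    then have "v 0 powr \<alpha> * \<alpha> <
        v 0 powr \<alpha> * ((\<alpha> - 1) * (1 + (real (N - 1) - 1) * tval N v powr \<alpha>))"
      using v0_pos by simp
    moreover have "v 1 powr \<alpha> = v 0 powr \<alpha> * tval N v powr \<alpha>"
      using rest[of "N - 1"] N_ge_3 powr_last by simp
    ultimately show "\<alpha> * v 0 powr \<alpha> < (\<alpha> - 1) * (pow_sum N \<alpha> v - v 1 powr \<alpha>)"
      unfolding pow_sum_Eset k by (simp add: algebra_simps)
  qed
qed

lemma linearly_unstable: "linearly_unstable N \<alpha> v"
  using unstable_if_tval_lt_1 unstable_if_tval_gt_1 tval_ne_1 by fastforce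

lemma tval_lt_1_if_single:
  assumes k: "k = 1" and \<alpha>: "(real N - 1) / (real N - 2) \<le> \<alpha>"
  shows "tval N v < 1"
proof (rule ccontr)
  assume "\<not> tval N v < 1"
  then have t: "1 < tval N v" using tval_ne_1 by simp
  have "level_equation \<alpha> 1 (real N - 1) (tval N v)"
    using level_equation_tval k N_ge_3 by (simp add: of_nat_diff)
  then have "\<alpha> < (real N - 1) / (real N - 1 - 1)"
    by (rule level_equation_gt_1_single_alpha_bound[OF _ t alpha_gt_1]) (use N_ge_3 in simp)
  with \<alpha> show False by simp
qed

end

theorem lemma4p5:
  fixes N k :: nat and \<alpha> :: real and v :: "nat \<Rightarrow> real"
  assumes "N \<ge> 3" and "\<alpha> > 1"
    and "1 \<le> k" and "2 * k \<le> N"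
    and "v \<in> Eset N \<alpha> k"
  shows "(k = 1 \<and> \<alpha> \<ge> (real N - 1) / (real N - 2) \<longrightarrow>
            tval N v < 1 \<and> linearly_unstable N \<alpha> v)
       \<and> (\<alpha> < (real N - 1) / (real N - 2) \<longrightarrow> linearly_unstable N \<alpha> v)"
proof -
  interpret Ek_equilibrium N k \<alpha> v
    using assms by unfold_locales
  show ?thesis using linearly_unstable tval_lt_1_if_single by blast
qed

end
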